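(* Let $d,n\ge 1$. Let $\Sigma=U\Lambda U^\top$ be a $d\times d$ covariance matrix, where $U$ is orthogonal and $\Lambda=\mathrm{diag}(\lambda_1,\dots,\lambda_d)$. Let $x^{(1)},\dots,x^{(n+1)}\in\mathbb{R}^d$ be i.i.d. $\mathcal{N}(0,\Sigma)$, let $w_\star\sim\mathcal{N}(0,I_d)$ be independent of them, and set $y^{(i)}=\langle x^{(i)},w_\star\rangle$ for $i=1,\dots,n$. Let $$Z_0=\begin{bmatrix} x^{(1)} & \cdots & x^{(n)} & x^{(n+1)}\\ y^{(1)} & \cdots & y^{(n)} & 0\end{bmatrix}\in\mathbb{R}^{(d+1)\times(n+1)},\qquad M=\begin{bmatrix} I_n & 0\\ 0& 0\end{bmatrix}\in\mathbb{R}^{(n+1)\times(n+1)}.$$ For $b\in\mathbb{R}^{d+1}$ and $A\in\mathbb{R}^{(d+1)\times d}$ let $P=\begin{bmatrix}0_{d\times(d+1)}\\ b^\top\end{bmatrix}\in\mathbb{R}^{(d+1)\times(d+1)}$ and $Q=\begin{bmatrix}A & 0_{(d+1)\times 1}\end{bmatrix}\in\mathbb{R}^{(d+1)\times(d+1)}$, let $Z_1=Z_0+\frac1n PZ_0M(Z_0^\top QZ_0)$, and define $$f(b,A)=\mathbb{E}\Big[\big([Z_1]_{d+1,n+1}+w_\star^\top x^{(n+1)}\big)^2\Big].$$ Then the choice $$b^\top=[0\ 0\ \cdots\ 0\ 1],\qquad A=-\begin{bmatrix} U\,\mathrm{diag}\Big(\Big\{\frac{1}{\frac{n+1}{n}\lambda_i+\frac1n\sum_{k=1}^d\lambda_k}\Big\}_{i=1}^d\Big)U^\top\\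 0_{1\times d}\end{bmatrix}$$ is a global minimum of $f$ over all $b\in\mathbb{R}^{d+1}$, $A\in\mathbb{R}^{(d+1)\times d}$; moreover, for every $\gamma\neq0$, the rescaled pair $(\gamma b,\gamma^{-1}A)$ is also a global minimum.
   Context: $[X]_{i,j}$ denotes the $(i,j)$ entry of a matrix $X$. The expectation is over $x^{(1)},\dots,x^{(n+1)}$ and $w_\star$. *)

theory Defs
  imports "HOL-Probability.Probability"
begin

text \<open>Conventions: vectors are functions nat => real, matrices are functions
nat => nat => real; all indices are 0-based and only the entries inside the
stated ranges are relevant. Row/column d (resp. n) of the paper is index d+1
(resp. n+1) there.\<close>

definition mat_mult :: "nat \<Rightarrow> (nat \<Rightarrow> nat \<Rightarrow> real) \<Rightarrow> (nat \<Rightarrow> nat \<Rightarrow> real) \<Rightarrow> (nat \<Rightarrow> nat \<Rightarrow> real)" where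
  "mat_mult k X Y = (\<lambda>i j. \<Sum>l<k. X i l * Y l j)"

definition mat_transpose :: "(nat \<Rightarrow> nat \<Rightarrow> real) \<Rightarrow> (nat \<Rightarrow> nat \<Rightarrow> real)" where
  "mat_transpose X = (\<lambda>i j. X j i)"

definition std_gauss :: "real measure" where
  "std_gauss = density lborel (\<lambda>x. ennreal (std_normal_density x))"

definition std_gauss_vec :: "nat \<Rightarrow> (nat \<Rightarrow> real) measure" where
  "std_gauss_vec d = PiM {..<d} (\<lambda>_. std_gauss)"

text \<open>N(0, R R^T): the law of R g for g ~ N(0, I_d).\<close>
definition gauss_vec :: "nat \<Rightarrow> (nat \<Rightarrow> nat \<Rightarrow> real) \<Rightarrow> (nat \<Rightarrow> real) measure" where
  "gauss_vec d R = distr (std_gauss_vec d) (PiM {..<d} (\<lambda>_. lborel))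
      (\<lambda>g. restrict (\<lambda>j. \<Sum>k<d. R j k * g k) {..<d})"

definition spectral_mat :: "nat \<Rightarrow> (nat \<Rightarrow> nat \<Rightarrow> real) \<Rightarrow> (nat \<Rightarrow> real) \<Rightarrow> (nat \<Rightarrow> nat \<Rightarrow> real)" where
  "spectral_mat d U lam = (\<lambda>i j. \<Sum>k<d. U i k * lam k * U j k)"

definition cov_gauss :: "nat \<Rightarrow> (nat \<Rightarrow> nat \<Rightarrow> real) \<Rightarrow> (nat \<Rightarrow> real) \<Rightarrow> (nat \<Rightarrow> real) measure" where
  "cov_gauss d U lam = gauss_vec d (spectral_mat d U (\<lambda>k. sqrt (lam k)))"

text \<open>Joint law of (x^(1),...,x^(n+1), w_star): index i < n+1 is x^(i+1) ~ N(0,Sigma),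
index n+1 is w_star ~ N(0,I_d); all independent.\<close>
definition data_measure :: "nat \<Rightarrow> nat \<Rightarrow> (nat \<Rightarrow> nat \<Rightarrow> real) \<Rightarrow> (nat \<Rightarrow> real) \<Rightarrow> (nat \<Rightarrow> nat \<Rightarrow> real) measure" where
  "data_measure d n U lam =
     PiM {..n+1} (\<lambda>i. if i \<le> n then cov_gauss d U lam else std_gauss_vec d)"

text \<open>Z_0 in R^{(d+1) x (n+1)}; omega i = x^(i+1) for i <= n, omega (n+1) = w_star,
y^(i+1) = <x^(i+1), w_star>.\<close>
definition Z0 :: "nat \<Rightarrow> nat \<Rightarrow> (nat \<Rightarrow> nat \<Rightarrow> real) \<Rightarrow> (nat \<Rightarrow> nat \<Rightarrow> real)" where
  "Z0 d n \<omega> = (\<lambda>i j. if i < d then \<omega> j i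
                      else if j < n then (\<Sum>k<d. \<omega> j k * \<omega> (n+1) k) else 0)"

definition Mmask :: "nat \<Rightarrow> (nat \<Rightarrow> nat \<Rightarrow> real)" where
  "Mmask n = (\<lambda>i j. if i = j \<and> i < n then 1 else 0)"

definition Pmat :: "nat \<Rightarrow> (nat \<Rightarrow> real) \<Rightarrow> (nat \<Rightarrow> nat \<Rightarrow> real)" where
  "Pmat d b = (\<lambda>i j. if i = d then b j else 0)"

definition Qmat :: "nat \<Rightarrow> (nat \<Rightarrow> nat \<Rightarrow> real) \<Rightarrow> (nat \<Rightarrow> nat \<Rightarrow> real)" where
  "Qmat d A = (\<lambda>i j. if j < d then A i j else 0)"

definition Z1 :: "nat \<Rightarrow> nat \<Rightarrow> (nat \<Rightarrow> real) \<Rightarrow> (nat \<Rightarrow> nat \<Rightarrow> real) \<Rightarrow> (nat \<Rightarrow> nat \<Rightarrow> real) \<Rightarrow> (nat \<Rightarrow> nat \<Rightarrow> real)" where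
  "Z1 d n b A \<omega> =
     (let Z = Z0 d n \<omega>;
          G = mat_mult (d+1) (mat_mult (d+1) (mat_transpose Z) (Qmat d A)) Z;
          L = mat_mult (n+1) (mat_mult (d+1) (Pmat d b) Z) (Mmask n)
      in (\<lambda>i j. Z i j + (1 / real n) * mat_mult (n+1) L G i j))"

definition icl_loss :: "nat \<Rightarrow> nat \<Rightarrow> (nat \<Rightarrow> nat \<Rightarrow> real) \<Rightarrow> (nat \<Rightarrow> real) \<Rightarrow> (nat \<Rightarrow> real) \<Rightarrow> (nat \<Rightarrow> nat \<Rightarrow> real) \<Rightarrow> real" where
  "icl_loss d n U lam b A =
     (\<integral>\<omega>. (Z1 d n b A \<omega> d n + (\<Sum>k<d. \<omega> (n+1) k * \<omega> n k))\<^sup>2 \<partial>data_measure d n U lam)"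

definition b_opt :: "nat \<Rightarrow> (nat \<Rightarrow> real)" where
  "b_opt d = (\<lambda>j. if j = d then 1 else 0)"

definition A_opt :: "nat \<Rightarrow> nat \<Rightarrow> (nat \<Rightarrow> nat \<Rightarrow> real) \<Rightarrow> (nat \<Rightarrow> real) \<Rightarrow> (nat \<Rightarrow> nat \<Rightarrow> real)" where
  "A_opt d n U lam = (\<lambda>i j. if i < d then
       - (\<Sum>k<d. U i k * (1 / ((real n + 1) / real n * lam k + (1 / real n) * (\<Sum>m<d. lam m))) * U j k)
     else 0)"

end

theory Submission
  imports Defs "Jordan_Normal_Form.Determinant"
begin

text \<open>
  The prediction of the model is bilinear in (b, A): a combination, with coefficients b_m A_qp,
  of the features z_ml z_ql x_p averaged over the context columns l, where z_l is a column of Z_0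
  and x the query. Writing r for the error of the claimed optimum, the loss of any (b, A) is
  E[(pred(b, A) - pred_opt + r)^2], so it is minimal at the claimed optimum once r is orthogonal to
  every feature. A feature built from two data coordinates or from two labels meets r only in
  monomials with an odd number of factors of w_star, so that correlation vanishes. For x_ml y_l x_p,
  Isserlis' theorem gives the (m, p) entry of \<Sigma>^2 - \<Sigma> D \<Gamma> \<Sigma> with D = (n+1)/n \<Sigma> + (tr \<Sigma>)/n,
  and the claimed A = -\<Gamma> inverts D on the range of \<Sigma>. Expectations are evaluated monomial by
  monomial, using the independence of the samples and of w_star. Rescaling to (\<gamma> b, A / \<gamma>)
  leaves the prediction unchanged.
\<close>

lemma orthogonal_cols_of_orthogonal_rows:
  fixes U :: "nat \<Rightarrow> nat \<Rightarrow> real"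
  assumes orth: "\<And>i j. i < d \<Longrightarrow> j < d \<Longrightarrow> (\<Sum>k<d. U i k * U j k) = (if i = j then 1 else 0)"
    and "i < d" "j < d"
  shows "(\<Sum>k<d. U k i * U k j) = (if i = j then 1 else 0)"
proof -
  define UM :: "real mat" where "UM = mat d d (\<lambda>(i, j). U i j)"
  have carrier: "UM \<in> carrier_mat d d" "transpose_mat UM \<in> carrier_mat d d"
    unfolding UM_def by auto
  have "UM * transpose_mat UM = 1\<^sub>m d"
    by (rule eq_matI) (auto simp: UM_def scalar_prod_def orth atLeast0LessThan)
  then have "transpose_mat UM * UM = 1\<^sub>m d"
    using mat_mult_left_right_inverse carrier by blast
  then have "(transpose_mat UM * UM) $$ (i, j) = (1\<^sub>m d :: real mat) $$ (i, j)"
    by simp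
  then show ?thesis
    using assms(2,3) by (simp add: UM_def scalar_prod_def atLeast0LessThan)
qed

definition kdelta :: "nat \<Rightarrow> nat \<Rightarrow> real" where
  "kdelta i j = (if i = j then 1 else 0)"

lemma sum_kdelta_left: "finite I \<Longrightarrow> a \<in> I \<Longrightarrow> (\<Sum>j\<in>I. f j * kdelta a j) = f a"
  by (simp add: kdelta_def if_distrib sum.delta cong: if_cong)

lemma sum4_kdelta_pairings:
  fixes F :: "nat \<Rightarrow> nat \<Rightarrow> nat \<Rightarrow> nat \<Rightarrow> real"
  assumes I: "finite I"
  shows "(\<Sum>k1\<in>I. \<Sum>k2\<in>I. \<Sum>k3\<in>I. \<Sum>k4\<in>I. F k1 k2 k3 k4 *
            (kdelta k1 k2 * kdelta k3 k4 + kdelta k1 k3 * kdelta k2 k4 + kdelta k1 k4 * kdelta k2 k3))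
       = (\<Sum>k1\<in>I. \<Sum>k3\<in>I. F k1 k1 k3 k3) + (\<Sum>k1\<in>I. \<Sum>k2\<in>I. F k1 k2 k1 k2)
         + (\<Sum>k1\<in>I. \<Sum>k2\<in>I. F k1 k2 k2 k1)"
proof -
  have t1: "(\<Sum>k1\<in>I. \<Sum>k2\<in>I. \<Sum>k3\<in>I. \<Sum>k4\<in>I. F k1 k2 k3 k4 * (kdelta k1 k2 * kdelta k3 k4))
      = (\<Sum>k1\<in>I. \<Sum>k3\<in>I. F k1 k1 k3 k3)"
  proof -
    have "(\<Sum>k1\<in>I. \<Sum>k2\<in>I. \<Sum>k3\<in>I. \<Sum>k4\<in>I. F k1 k2 k3 k4 * (kdelta k1 k2 * kdelta k3 k4))
        = (\<Sum>k1\<in>I. \<Sum>k2\<in>I. \<Sum>k3\<in>I. \<Sum>k4\<in>I. (F k1 k2 k3 k4 * kdelta k1 k2) * kdelta k3 k4)"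
      by (simp add: mult.assoc)
    also have "\<dots> = (\<Sum>k1\<in>I. \<Sum>k2\<in>I. \<Sum>k3\<in>I. F k1 k2 k3 k3 * kdelta k1 k2)"
      using I by (intro sum.cong refl) (simp add: sum_kdelta_left)
    also have "\<dots> = (\<Sum>k1\<in>I. \<Sum>k2\<in>I. (\<Sum>k3\<in>I. F k1 k2 k3 k3) * kdelta k1 k2)"
      by (simp add: sum_distrib_right)
    also have "\<dots> = (\<Sum>k1\<in>I. \<Sum>k3\<in>I. F k1 k1 k3 k3)"
      by (rule sum.cong[OF refl]) (simp add: sum_kdelta_left I)
    finally show ?thesis .
  qed
  have t2: "(\<Sum>k1\<in>I. \<Sum>k2\<in>I. \<Sum>k3\<in>I. \<Sum>k4\<in>I. F k1 k2 k3 k4 * (kdelta k1 k3 * kdelta k2 k4))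
      = (\<Sum>k1\<in>I. \<Sum>k2\<in>I. F k1 k2 k1 k2)"
  proof -
    have "(\<Sum>k1\<in>I. \<Sum>k2\<in>I. \<Sum>k3\<in>I. \<Sum>k4\<in>I. F k1 k2 k3 k4 * (kdelta k1 k3 * kdelta k2 k4))
        = (\<Sum>k1\<in>I. \<Sum>k2\<in>I. \<Sum>k3\<in>I. \<Sum>k4\<in>I. (F k1 k2 k3 k4 * kdelta k1 k3) * kdelta k2 k4)"
      by (simp add: mult.assoc)
    also have "\<dots> = (\<Sum>k1\<in>I. \<Sum>k2\<in>I. \<Sum>k3\<in>I. F k1 k2 k3 k2 * kdelta k1 k3)"
      using I by (intro sum.cong refl) (simp add: sum_kdelta_left)
    also have "\<dots> = (\<Sum>k1\<in>I. \<Sum>k2\<in>I. F k1 k2 k1 k2)"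
      using I by (intro sum.cong refl) (simp add: sum_kdelta_left)
    finally show ?thesis .
  qed
  have t3: "(\<Sum>k1\<in>I. \<Sum>k2\<in>I. \<Sum>k3\<in>I. \<Sum>k4\<in>I. F k1 k2 k3 k4 * (kdelta k1 k4 * kdelta k2 k3))
      = (\<Sum>k1\<in>I. \<Sum>k2\<in>I. F k1 k2 k2 k1)"
  proof -
    have "(\<Sum>k1\<in>I. \<Sum>k2\<in>I. \<Sum>k3\<in>I. \<Sum>k4\<in>I. F k1 k2 k3 k4 * (kdelta k1 k4 * kdelta k2 k3))
        = (\<Sum>k1\<in>I. \<Sum>k2\<in>I. \<Sum>k3\<in>I. \<Sum>k4\<in>I. (F k1 k2 k3 k4 * kdelta k2 k3) * kdelta k1 k4)"
      by (simp add: mult_ac)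
    also have "\<dots> = (\<Sum>k1\<in>I. \<Sum>k2\<in>I. \<Sum>k3\<in>I. F k1 k2 k3 k1 * kdelta k2 k3)"
      using I by (intro sum.cong refl) (simp add: sum_kdelta_left)
    also have "\<dots> = (\<Sum>k1\<in>I. \<Sum>k2\<in>I. F k1 k2 k2 k1)"
      using I by (intro sum.cong refl) (simp add: sum_kdelta_left)
    finally show ?thesis .
  qed
  show ?thesis
    unfolding distrib_left sum.distrib t1 t2 t3 ..
qed

lemma sum_product4:
  fixes a b c e :: "nat \<Rightarrow> real"
  shows "(\<Sum>k1\<in>I. a k1) * ((\<Sum>k2\<in>I. b k2) * ((\<Sum>k3\<in>I. c k3) * (\<Sum>k4\<in>I. e k4)))
     = (\<Sum>k1\<in>I. \<Sum>k2\<in>I. \<Sum>k3\<in>I. \<Sum>k4\<in>I. a k1 * (b k2 * (c k3 * e k4)))"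
  by (simp only: sum_product) (simp only: sum_distrib_left)

lemma prod_list_map_eq_prod_count_list:
  fixes f :: "'a \<Rightarrow> 'b::comm_monoid_mult"
  assumes "finite I" "set as \<subseteq> I"
  shows "(\<Prod>a\<leftarrow>as. f a) = (\<Prod>i\<in>I. f i ^ count_list as i)"
  using assms(2)
proof (induction as)
  case (Cons a as)
  have "(\<Prod>i\<in>I. f i ^ count_list (a # as) i)
      = (\<Prod>i\<in>I. f i ^ count_list as i * (if i = a then f i else 1))"
    by (intro prod.cong) (auto simp: mult.commute)
  also have "\<dots> = (\<Prod>i\<in>I. f i ^ count_list as i) * f a"
    using Cons.prems assms(1) by (simp add: prod.distrib prod.delta')
  finally show ?case
    using Cons by (simp add: mult.commute)
qed simp

lemma sum_if_eq_count:
  assumes "l < n"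
  shows "(\<Sum>k<n. if k = l then (x :: real) else y) = x + (real n - 1) * y"
proof -
  have "(\<Sum>k<n. if k = l then x else y) = (\<Sum>k<n. (if k = l then x - y else 0) + y)"
    by (intro sum.cong refl) auto
  also have "\<dots> = (x - y) + real n * y"
    using assms by (simp add: sum.distrib sum.delta')
  finally show ?thesis
    by (simp add: algebra_simps)
qed

lemma spectral_mat_sym: "spectral_mat d U x a b = spectral_mat d U x b a"
  unfolding spectral_mat_def by (simp add: mult_ac)

lemma spectral_mat_cong:
  "(\<And>t. t < d \<Longrightarrow> x t = y t) \<Longrightarrow> spectral_mat d U x a b = spectral_mat d U y a b"
  unfolding spectral_mat_def by (intro sum.cong) auto

lemma spectral_mat_zero: "spectral_mat d U (\<lambda>_. 0) a b = 0"
  unfolding spectral_mat_def by simp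

lemma spectral_mat_diff:
  "spectral_mat d U (\<lambda>t. x t - y t) a b = spectral_mat d U x a b - spectral_mat d U y a b"
  unfolding spectral_mat_def by (simp add: sum_subtractf algebra_simps)

lemma spectral_mat_add:
  "spectral_mat d U (\<lambda>t. x t + y t) a b = spectral_mat d U x a b + spectral_mat d U y a b"
  unfolding spectral_mat_def by (simp add: sum.distrib algebra_simps)

lemma spectral_mat_cmult:
  "spectral_mat d U (\<lambda>t. c * x t) a b = c * spectral_mat d U x a b"
  unfolding spectral_mat_def by (simp add: sum_distrib_left mult_ac)

context
  fixes d :: nat and U :: "nat \<Rightarrow> nat \<Rightarrow> real"
  assumes orth: "\<And>i j. i < d \<Longrightarrow> j < d \<Longrightarrow> (\<Sum>k<d. U i k * U j k) = (if i = j then 1 else 0)"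
begin

lemma spectral_mat_mult:
  "(\<Sum>j<d. spectral_mat d U x a j * spectral_mat d U y j b) = spectral_mat d U (\<lambda>t. x t * y t) a b"
proof -
  have cols: "(\<Sum>j<d. U j t * U j t') = kdelta t t'" if "t < d" "t' < d" for t t'
    using orthogonal_cols_of_orthogonal_rows[OF orth that] by (simp add: kdelta_def)
  have "(\<Sum>j<d. spectral_mat d U x a j * spectral_mat d U y j b)
      = (\<Sum>j<d. \<Sum>t<d. \<Sum>t'<d. (U a t * x t * y t' * U b t') * (U j t * U j t'))"
    unfolding spectral_mat_def sum_product by (simp add: mult_ac)
  also have "\<dots> = (\<Sum>t<d. \<Sum>j<d. \<Sum>t'<d. (U a t * x t * y t' * U b t') * (U j t * U j t'))"
    by (rule sum.swap)
  also have "\<dots> = (\<Sum>t<d. \<Sum>t'<d. \<Sum>j<d. (U a t * x t * y t' * U b t') * (U j t * U j t'))"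
    by (rule sum.cong[OF refl], rule sum.swap)
  also have "\<dots> = (\<Sum>t<d. \<Sum>t'<d. (U a t * x t * y t' * U b t') * kdelta t t')"
    by (intro sum.cong refl) (simp add: sum_distrib_left[symmetric] cols)
  also have "\<dots> = (\<Sum>t<d. U a t * x t * y t * U b t)"
    by (rule sum.cong[OF refl]) (simp add: sum_kdelta_left)
  finally show ?thesis
    unfolding spectral_mat_def by (simp add: mult_ac)
qed

lemma spectral_mat_trace: "(\<Sum>i<d. spectral_mat d U x i i) = (\<Sum>t<d. x t)"
proof -
  have "(\<Sum>i<d. spectral_mat d U x i i) = (\<Sum>t<d. x t * (\<Sum>i<d. U i t * U i t))"
    unfolding spectral_mat_def by (subst sum.swap) (simp add: sum_distrib_left mult_ac)
  also have "\<dots> = (\<Sum>t<d. x t)"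
    by (intro sum.cong refl) (simp add: orthogonal_cols_of_orthogonal_rows[OF orth])
  finally show ?thesis .
qed

lemma spectral_mat_mult3:
  "(\<Sum>a<d. \<Sum>r<d. spectral_mat d U x i a * spectral_mat d U y a r * spectral_mat d U z r p)
    = spectral_mat d U (\<lambda>t. x t * y t * z t) i p"
proof -
  have "(\<Sum>a<d. \<Sum>r<d. spectral_mat d U x i a * spectral_mat d U y a r * spectral_mat d U z r p)
      = (\<Sum>a<d. spectral_mat d U x i a * spectral_mat d U (\<lambda>t. y t * z t) a p)"
    by (simp add: mult.assoc sum_distrib_left[symmetric] spectral_mat_mult)
  also have "\<dots> = spectral_mat d U (\<lambda>t. x t * y t * z t) i p"
    by (simp add: spectral_mat_mult mult.assoc)
  finally show ?thesis .
qed

end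

lemma abs_add_power_le: "\<bar>a + b\<bar> ^ k \<le> 2 ^ k * (\<bar>a\<bar> ^ k + \<bar>b :: real\<bar> ^ k)"
proof -
  have "\<bar>a + b\<bar> ^ k \<le> (2 * max \<bar>a\<bar> \<bar>b\<bar>) ^ k"
    by (intro power_mono) auto
  also have "\<dots> \<le> 2 ^ k * (\<bar>a\<bar> ^ k + \<bar>b\<bar> ^ k)"
    by (simp add: power_mult_distrib max_def)
  finally show ?thesis .
qed

lemma abs_mult_power_le: "\<bar>a * b\<bar> ^ k \<le> \<bar>a\<bar> ^ (2 * k) + \<bar>b :: real\<bar> ^ (2 * k)"
proof -
  have "\<bar>a * b\<bar> ^ k = \<bar>a\<bar> ^ k * \<bar>b\<bar> ^ k"
    by (simp add: abs_mult power_mult_distrib)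
  also have "\<dots> \<le> (\<bar>a\<bar> ^ k)\<^sup>2 + (\<bar>b\<bar> ^ k)\<^sup>2"
  proof -
    have "0 \<le> \<bar>a\<bar> ^ k * \<bar>b\<bar> ^ k"
      by simp
    then show ?thesis
      using sum_squares_bound[of "\<bar>a\<bar> ^ k" "\<bar>b\<bar> ^ k", unfolded mult.assoc] by linarith
  qed
  finally show ?thesis
    by (simp only: power_even_eq)
qed

definition finite_moments :: "'a measure \<Rightarrow> ('a \<Rightarrow> real) \<Rightarrow> bool" where
  "finite_moments M f \<longleftrightarrow> f \<in> borel_measurable M \<and> (\<forall>k. integrable M (\<lambda>x. \<bar>f x\<bar> ^ k))"

lemma finite_moments_integrable:
  assumes "finite_moments M f"
  shows "integrable M f"
proof -
  have "f \<in> borel_measurable M" "integrable M (\<lambda>x. \<bar>f x\<bar> ^ 1)"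
    using assms unfolding finite_moments_def by blast+
  then show ?thesis
    by (simp add: integrable_abs_iff)
qed

lemma finite_moments_add:
  assumes f: "finite_moments M f" and g: "finite_moments M g"
  shows "finite_moments M (\<lambda>x. f x + g x)"
  unfolding finite_moments_def
proof (intro conjI allI)
  show meas: "(\<lambda>x. f x + g x) \<in> borel_measurable M"
    using f g unfolding finite_moments_def by (intro borel_measurable_add) auto
  fix k
  show "integrable M (\<lambda>x. \<bar>f x + g x\<bar> ^ k)"
  proof (rule Bochner_Integration.integrable_bound)
    show "integrable M (\<lambda>x. 2 ^ k * (\<bar>f x\<bar> ^ k + \<bar>g x\<bar> ^ k))"
      using f g unfolding finite_moments_def by simp
    show "AE x in M. norm (\<bar>f x + g x\<bar> ^ k) \<le> norm (2 ^ k * (\<bar>f x\<bar> ^ k + \<bar>g x\<bar> ^ k))"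
      by (simp add: abs_add_power_le)
  qed (use meas in measurable)
qed

lemma finite_moments_mult:
  assumes f: "finite_moments M f" and g: "finite_moments M g"
  shows "finite_moments M (\<lambda>x. f x * g x)"
  unfolding finite_moments_def
proof (intro conjI allI)
  show meas: "(\<lambda>x. f x * g x) \<in> borel_measurable M"
    using f g unfolding finite_moments_def by (intro borel_measurable_times) auto
  fix k
  show "integrable M (\<lambda>x. \<bar>f x * g x\<bar> ^ k)"
  proof (rule Bochner_Integration.integrable_bound)
    show "integrable M (\<lambda>x. \<bar>f x\<bar> ^ (2 * k) + \<bar>g x\<bar> ^ (2 * k))"
      using f g unfolding finite_moments_def by simp
    show "AE x in M. norm (\<bar>f x * g x\<bar> ^ k) \<le> norm (\<bar>f x\<bar> ^ (2 * k) + \<bar>g x\<bar> ^ (2 * k))"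
      using abs_mult_power_le by (simp del: power_abs)
  qed (use meas in measurable)
qed

lemma finite_moments_const: "finite_measure M \<Longrightarrow> finite_moments M (\<lambda>x. c)"
  unfolding finite_moments_def by (simp add: finite_measure.integrable_const)

lemma finite_moments_diff:
  assumes "finite_moments M f" "finite_moments M g"
  shows "finite_moments M (\<lambda>x. f x - g x)"
proof -
  have "finite_moments M (\<lambda>x. - g x)"
    using assms(2) unfolding finite_moments_def by simp
  then show ?thesis
    using finite_moments_add[OF assms(1)] by fastforce
qed

lemma finite_moments_cmult:
  "finite_measure M \<Longrightarrow> finite_moments M f \<Longrightarrow> finite_moments M (\<lambda>x. c * f x)"
  using finite_moments_mult[OF finite_moments_const] by blast

lemma finite_moments_sum:
  assumes "finite_measure M" "\<And>i. i \<in> I \<Longrightarrow> finite_moments M (f i)"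
  shows "finite_moments M (\<lambda>x. \<Sum>i\<in>I. f i x)"
  using assms(2)
proof (induction I rule: infinite_finite_induct)
  case (insert a A)
  then show ?case
    using finite_moments_add[of M "f a" "\<lambda>x. \<Sum>i\<in>A. f i x"] by simp
qed (use finite_moments_const[OF assms(1)] in auto)

lemma finite_moments_prod_list:
  assumes "finite_measure M" "\<And>a. a \<in> set as \<Longrightarrow> finite_moments M (f a)"
  shows "finite_moments M (\<lambda>x. \<Prod>a\<leftarrow>as. f a x)"
  using assms(2)
proof (induction as)
  case (Cons a as)
  then show ?case
    using finite_moments_mult[of M "f a" "\<lambda>x. \<Prod>a\<leftarrow>as. f a x"] by simp
qed (use finite_moments_const[OF assms(1)] in simp)

lemma finite_moments_distr:
  assumes "T \<in> measurable M N" "f \<in> borel_measurable N" "finite_moments M (\<lambda>x. f (T x))"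
  shows "finite_moments (distr M N T) f"
  using assms by (auto simp: finite_moments_def integrable_distr_eq)

lemma finite_moments_component:
  assumes "\<And>i. i \<in> I \<Longrightarrow> prob_space (M i)" "i \<in> I" "finite_moments (M i) f"
  shows "finite_moments (PiM I M) (\<lambda>\<omega>. f (\<omega> i))"
proof -
  have "f \<in> borel_measurable (M i)"
    using assms(3) by (simp add: finite_moments_def)
  moreover have "finite_moments (distr (PiM I M) (M i) (\<lambda>\<omega>. \<omega> i)) f"
    using distr_PiM_component[of I M i, OF assms(1,2)] assms(3) by simp
  ultimately show ?thesis
    using assms(2)
    by (auto simp: finite_moments_def integrable_distr_eq measurable_component_singleton)
qed

lemma integral_sum_cmult:
  fixes f :: "'i \<Rightarrow> 'a \<Rightarrow> real"
  assumes "\<And>i. i \<in> I \<Longrightarrow> integrable M (f i)"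
  shows "(\<integral>x. (\<Sum>i\<in>I. c i * f i x) \<partial>M) = (\<Sum>i\<in>I. c i * integral\<^sup>L M (f i))"
  using assms by (subst Bochner_Integration.integral_sum) auto

lemma integral_sum2_cmult:
  fixes f :: "'i \<Rightarrow> 'j \<Rightarrow> 'a \<Rightarrow> real"
  assumes "\<And>i j. i \<in> I \<Longrightarrow> j \<in> J \<Longrightarrow> integrable M (f i j)"
  shows "(\<integral>x. (\<Sum>i\<in>I. \<Sum>j\<in>J. c i j * f i j x) \<partial>M)
    = (\<Sum>i\<in>I. \<Sum>j\<in>J. c i j * integral\<^sup>L M (f i j))"
proof -
  have "(\<integral>x. (\<Sum>i\<in>I. \<Sum>j\<in>J. c i j * f i j x) \<partial>M) = (\<Sum>i\<in>I. \<integral>x. (\<Sum>j\<in>J. c i j * f i j x) \<partial>M)"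
    using assms by (intro Bochner_Integration.integral_sum Bochner_Integration.integrable_sum
        Bochner_Integration.integrable_mult_right)
  also have "\<dots> = (\<Sum>i\<in>I. \<Sum>j\<in>J. c i j * integral\<^sup>L M (f i j))"
    using assms by (intro sum.cong refl integral_sum_cmult)
  finally show ?thesis .
qed

lemma integral_sum4_cmult:
  fixes f :: "'i \<Rightarrow> 'j \<Rightarrow> 'k \<Rightarrow> 'l \<Rightarrow> 'a \<Rightarrow> real"
  assumes "\<And>i j k l. i \<in> I \<Longrightarrow> j \<in> J \<Longrightarrow> k \<in> K \<Longrightarrow> l \<in> L \<Longrightarrow> integrable M (f i j k l)"
  shows "(\<integral>x. (\<Sum>i\<in>I. \<Sum>j\<in>J. \<Sum>k\<in>K. \<Sum>l\<in>L. c i j k l * f i j k l x) \<partial>M)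
    = (\<Sum>i\<in>I. \<Sum>j\<in>J. \<Sum>k\<in>K. \<Sum>l\<in>L. c i j k l * integral\<^sup>L M (f i j k l))"
proof -
  have "(\<integral>x. (\<Sum>i\<in>I. \<Sum>j\<in>J. \<Sum>k\<in>K. \<Sum>l\<in>L. c i j k l * f i j k l x) \<partial>M)
      = (\<Sum>i\<in>I. \<Sum>j\<in>J. 1 * (\<integral>x. (\<Sum>k\<in>K. \<Sum>l\<in>L. c i j k l * f i j k l x) \<partial>M))"
    using assms integral_sum2_cmult[where c="\<lambda>_ _. 1" and f="\<lambda>i j x. \<Sum>k\<in>K. \<Sum>l\<in>L. c i j k l * f i j k l x"]
    by (simp add: Bochner_Integration.integrable_sum)
  also have "\<dots> = (\<Sum>i\<in>I. \<Sum>j\<in>J. \<Sum>k\<in>K. \<Sum>l\<in>L. c i j k l * integral\<^sup>L M (f i j k l))"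
    using assms by (intro sum.cong refl) (simp add: integral_sum2_cmult)
  finally show ?thesis .
qed

lemma integral_sum2:
  fixes f :: "'i \<Rightarrow> 'j \<Rightarrow> 'a \<Rightarrow> real"
  assumes "\<And>i j. i \<in> I \<Longrightarrow> j \<in> J \<Longrightarrow> integrable M (f i j)"
  shows "(\<integral>x. (\<Sum>i\<in>I. \<Sum>j\<in>J. f i j x) \<partial>M) = (\<Sum>i\<in>I. \<Sum>j\<in>J. integral\<^sup>L M (f i j))"
  using integral_sum2_cmult[of I J M f "\<lambda>_ _. 1"] assms by simp

lemma integral_power2_le_add_orthogonal:
  assumes "finite_measure M" "finite_moments M f" "finite_moments M h"
    and orthogonal: "(\<integral>x. f x * h x \<partial>M) = 0"
  shows "(\<integral>x. (h x)\<^sup>2 \<partial>M) \<le> (\<integral>x. (f x + h x)\<^sup>2 \<partial>M)"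
proof -
  have int: "integrable M (\<lambda>x. (f x)\<^sup>2)" "integrable M (\<lambda>x. f x * h x)" "integrable M (\<lambda>x. (h x)\<^sup>2)"
    using assms(2,3) unfolding power2_eq_square
    by (auto intro!: finite_moments_integrable finite_moments_mult)
  have "(\<integral>x. (f x + h x)\<^sup>2 \<partial>M) = (\<integral>x. (f x)\<^sup>2 + 2 * (f x * h x) + (h x)\<^sup>2 \<partial>M)"
    by (simp add: power2_sum mult.assoc add.commute add.left_commute)
  also have "\<dots> = (\<integral>x. (f x)\<^sup>2 \<partial>M) + 2 * (\<integral>x. f x * h x \<partial>M) + (\<integral>x. (h x)\<^sup>2 \<partial>M)"
    using int by (simp add: Bochner_Integration.integral_add)
  also have "\<dots> \<ge> (\<integral>x. (h x)\<^sup>2 \<partial>M)"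
    using orthogonal by simp
  finally show ?thesis .
qed

lemma prob_space_std_gauss: "prob_space std_gauss"
  unfolding std_gauss_def by (rule prob_space_normal_density) simp

lemma integral_std_gauss:
  fixes f :: "real \<Rightarrow> real"
  assumes "f \<in> borel_measurable borel"
  shows "integral\<^sup>L std_gauss f = (\<integral>x. std_normal_density x * f x \<partial>lborel)"
  unfolding std_gauss_def using assms by (subst integral_density) auto

lemma integrable_std_gauss_iff:
  fixes f :: "real \<Rightarrow> real"
  assumes "f \<in> borel_measurable borel"
  shows "integrable std_gauss f \<longleftrightarrow> integrable lborel (\<lambda>x. std_normal_density x * f x)"
  unfolding std_gauss_def using assms by (subst integrable_density) auto

lemma integrable_std_gauss_power: "integrable std_gauss (\<lambda>x. x ^ k)"
  by (subst integrable_std_gauss_iff) (auto intro: integrable_std_normal_moment)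

lemma finite_moments_std_gauss: "finite_moments std_gauss (\<lambda>x. x)"
  unfolding finite_moments_def
  by (subst integrable_std_gauss_iff)
     (auto simp: std_gauss_def intro: integrable_std_normal_moment_abs)

definition gauss_moment :: "nat \<Rightarrow> real" where
  "gauss_moment k = (\<integral>x. x ^ k \<partial>std_gauss)"

lemma gauss_moment_even: "gauss_moment (2 * k) = fact (2 * k) / (2 ^ k * fact k)"
  unfolding gauss_moment_def
  by (subst integral_std_gauss) (auto simp: integral_std_normal_moment_even)

lemma gauss_moment_odd: "gauss_moment (2 * k + 1) = 0"
  unfolding gauss_moment_def
  by (subst integral_std_gauss, simp, rule integral_std_normal_moment_odd)

lemma gauss_moment_simps:
  "gauss_moment 0 = 1" "gauss_moment (Suc 0) = 0" "gauss_moment (Suc (Suc 0)) = 1"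
  "gauss_moment (Suc (Suc (Suc 0))) = 0" "gauss_moment (Suc (Suc (Suc (Suc 0)))) = 3"
  using gauss_moment_even[of 0] gauss_moment_odd[of 0] gauss_moment_even[of 1]
    gauss_moment_odd[of 1] gauss_moment_even[of 2]
  by (simp_all add: eval_nat_numeral)

lemma prob_space_std_gauss_vec: "prob_space (std_gauss_vec d)"
  unfolding std_gauss_vec_def by (intro prob_space_PiM prob_space_std_gauss)

lemma sets_std_gauss_vec: "sets (std_gauss_vec d) = sets (PiM {..<d} (\<lambda>_. borel))"
  unfolding std_gauss_vec_def by (intro sets_PiM_cong) (auto simp: std_gauss_def)

lemma finite_moments_std_gauss_vec_coord:
  "a < d \<Longrightarrow> finite_moments (std_gauss_vec d) (\<lambda>g. g a)"
  unfolding std_gauss_vec_def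
  by (rule finite_moments_component[where f="\<lambda>x. x"])
     (auto intro: prob_space_std_gauss finite_moments_std_gauss)

interpretation std_gauss_product: product_sigma_finite "\<lambda>_::nat. std_gauss"
  unfolding product_sigma_finite_def
  using prob_space_imp_sigma_finite[OF prob_space_std_gauss] by simp

lemma integral_std_gauss_vec_monomial:
  assumes "set as \<subseteq> {..<d}"
  shows "(\<integral>g. (\<Prod>a\<leftarrow>as. g a) \<partial>std_gauss_vec d) = (\<Prod>i\<in>set as. gauss_moment (count_list as i))"
proof -
  have "(\<integral>g. (\<Prod>a\<leftarrow>as. g a) \<partial>std_gauss_vec d)
      = (\<integral>g. (\<Prod>i\<in>{..<d}. g i ^ count_list as i) \<partial>std_gauss_vec d)"
    by (simp add: prod_list_map_eq_prod_count_list[OF _ assms])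
  also have "\<dots> = (\<Prod>i\<in>{..<d}. gauss_moment (count_list as i))"
    unfolding std_gauss_vec_def gauss_moment_def
    by (rule std_gauss_product.product_integral_prod) (auto intro: integrable_std_gauss_power)
  also have "\<dots> = (\<Prod>i\<in>set as. gauss_moment (count_list as i))"
    using assms
    by (intro prod.mono_neutral_right) (auto simp: gauss_moment_simps count_list_0_iff)
  finally show ?thesis .
qed

lemma integral_std_gauss_vec_coord:
  "a < d \<Longrightarrow> (\<integral>g. g a \<partial>std_gauss_vec d) = 0"
  using integral_std_gauss_vec_monomial[of "[a]" d] by (simp add: gauss_moment_simps)

lemma integral_std_gauss_vec_moment2:
  "a < d \<Longrightarrow> b < d \<Longrightarrow> (\<integral>g. g a * g b \<partial>std_gauss_vec d) = kdelta a b"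
  using integral_std_gauss_vec_monomial[of "[a, b]" d]
  by (cases "a = b") (auto simp: gauss_moment_simps kdelta_def)

lemma integral_std_gauss_vec_moment3:
  "a < d \<Longrightarrow> b < d \<Longrightarrow> c < d \<Longrightarrow> (\<integral>g. g a * (g b * g c) \<partial>std_gauss_vec d) = 0"
  using integral_std_gauss_vec_monomial[of "[a, b, c]" d]
  by (cases "a = b"; cases "a = c"; cases "b = c") (auto simp: gauss_moment_simps insert_absorb)

lemma integral_std_gauss_vec_moment4:
  "a < d \<Longrightarrow> b < d \<Longrightarrow> c < d \<Longrightarrow> e < d \<Longrightarrow>
   (\<integral>g. g a * (g b * (g c * g e)) \<partial>std_gauss_vec d)
     = kdelta a b * kdelta c e + kdelta a c * kdelta b e + kdelta a e * kdelta b c"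
  using integral_std_gauss_vec_monomial[of "[a, b, c, e]" d]
  by (cases "a = b"; cases "a = c"; cases "a = e"; cases "b = c"; cases "b = e"; cases "c = e")
     (auto simp: gauss_moment_simps insert_absorb kdelta_def)

definition dot :: "nat \<Rightarrow> (nat \<Rightarrow> real) \<Rightarrow> (nat \<Rightarrow> real) \<Rightarrow> real" where
  "dot d u v = (\<Sum>k<d. u k * v k)"

lemma finite_moments_std_gauss_vec_dot: "finite_moments (std_gauss_vec d) (dot d u)"
  unfolding dot_def using prob_space_std_gauss_vec[THEN prob_space.finite_measure]
  by (intro finite_moments_sum finite_moments_cmult finite_moments_std_gauss_vec_coord) auto

lemma integral_std_gauss_vec_dot2:
  "(\<integral>g. dot d u g * dot d v g \<partial>std_gauss_vec d) = dot d u v"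
proof -
  have "(\<integral>g. dot d u g * dot d v g \<partial>std_gauss_vec d)
      = (\<integral>g. (\<Sum>k1<d. \<Sum>k2<d. (u k1 * v k2) * (g k1 * g k2)) \<partial>std_gauss_vec d)"
    unfolding dot_def sum_product by (simp add: mult_ac)
  also have "\<dots> = (\<Sum>k1<d. \<Sum>k2<d. (u k1 * v k2) * kdelta k1 k2)"
  proof -
    have "integrable (std_gauss_vec d) (\<lambda>g. g k1 * g k2)" if "k1 \<in> {..<d}" "k2 \<in> {..<d}" for k1 k2
      using that by (intro finite_moments_integrable finite_moments_mult finite_moments_std_gauss_vec_coord) auto
    then show ?thesis
      by (simp only: integral_sum2_cmult) (simp add: integral_std_gauss_vec_moment2)
  qed
  also have "\<dots> = dot d u v"
    unfolding dot_def by (intro sum.cong refl) (simp add: sum_kdelta_left)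
  finally show ?thesis .
qed

lemma integral_std_gauss_vec_dot4:
  "(\<integral>g. dot d u g * (dot d v g * (dot d w g * dot d z g)) \<partial>std_gauss_vec d)
   = dot d u v * dot d w z + dot d u w * dot d v z + dot d u z * dot d v w"
proof -
  have "(\<integral>g. dot d u g * (dot d v g * (dot d w g * dot d z g)) \<partial>std_gauss_vec d)
      = (\<integral>g. (\<Sum>k1<d. \<Sum>k2<d. \<Sum>k3<d. \<Sum>k4<d. (u k1 * v k2 * w k3 * z k4) *
              (g k1 * (g k2 * (g k3 * g k4)))) \<partial>std_gauss_vec d)"
    unfolding dot_def sum_product4 by (simp add: mult_ac)
  also have "\<dots> = (\<Sum>k1<d. \<Sum>k2<d. \<Sum>k3<d. \<Sum>k4<d. (u k1 * v k2 * w k3 * z k4) *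
            (kdelta k1 k2 * kdelta k3 k4 + kdelta k1 k3 * kdelta k2 k4 + kdelta k1 k4 * kdelta k2 k3))"
  proof -
    have "integrable (std_gauss_vec d) (\<lambda>g. g k1 * (g k2 * (g k3 * g k4)))"
      if "k1 \<in> {..<d}" "k2 \<in> {..<d}" "k3 \<in> {..<d}" "k4 \<in> {..<d}" for k1 k2 k3 k4
      using that by (intro finite_moments_integrable finite_moments_mult finite_moments_std_gauss_vec_coord) auto
    then show ?thesis
      by (simp only: integral_sum4_cmult) (simp add: integral_std_gauss_vec_moment4)
  qed
  also have "\<dots> = dot d u v * dot d w z + dot d u w * dot d v z + dot d u z * dot d v w"
    unfolding sum4_kdelta_pairings[OF finite_lessThan] dot_def sum_product by (simp add: mult_ac)
  finally show ?thesis .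
qed

definition cov_sqrt :: "nat \<Rightarrow> (nat \<Rightarrow> nat \<Rightarrow> real) \<Rightarrow> (nat \<Rightarrow> real) \<Rightarrow> nat \<Rightarrow> nat \<Rightarrow> real" where
  "cov_sqrt d U lam = spectral_mat d U (\<lambda>k. sqrt (lam k))"

definition lin_map :: "nat \<Rightarrow> (nat \<Rightarrow> nat \<Rightarrow> real) \<Rightarrow> (nat \<Rightarrow> real) \<Rightarrow> nat \<Rightarrow> real" where
  "lin_map d R g = restrict (\<lambda>j. dot d (R j) g) {..<d}"

lemma measurable_coord: "a < d \<Longrightarrow> (\<lambda>x. x a) \<in> borel_measurable (PiM {..<d} (\<lambda>_. borel))"
  by (auto intro: measurable_component_singleton)

lemma measurable_lin_map:
  "lin_map d R \<in> measurable (std_gauss_vec d) (PiM {..<d} (\<lambda>_. lborel))"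
proof -
  have "(\<lambda>g. dot d (R j) g) \<in> borel_measurable (PiM {..<d} (\<lambda>_. borel))" for j
    unfolding dot_def by measurable
  then show ?thesis
    unfolding lin_map_def measurable_cong_sets[OF sets_std_gauss_vec refl]
    by (intro measurable_restrict) simp
qed

lemma cov_gauss_eq_distr:
  "cov_gauss d U lam = distr (std_gauss_vec d) (PiM {..<d} (\<lambda>_. lborel)) (lin_map d (cov_sqrt d U lam))"
  unfolding cov_gauss_def gauss_vec_def lin_map_def cov_sqrt_def dot_def ..

lemma prob_space_cov_gauss: "prob_space (cov_gauss d U lam)"
  unfolding cov_gauss_eq_distr
  by (rule prob_space.prob_space_distr[OF prob_space_std_gauss_vec measurable_lin_map])

lemma integral_cov_gauss:
  fixes f :: "(nat \<Rightarrow> real) \<Rightarrow> real"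
  assumes "f \<in> borel_measurable (PiM {..<d} (\<lambda>_. borel))"
  shows "integral\<^sup>L (cov_gauss d U lam) f
    = (\<integral>g. f (lin_map d (cov_sqrt d U lam) g) \<partial>std_gauss_vec d)"
proof -
  have "f \<in> borel_measurable (PiM {..<d} (\<lambda>_. lborel))"
    using assms by (simp add: measurable_cong_sets[OF sets_PiM_cong[OF refl sets_lborel] refl])
  then show ?thesis
    unfolding cov_gauss_eq_distr by (rule integral_distr[OF measurable_lin_map])
qed

lemma finite_moments_cov_gauss_coord:
  assumes "a < d"
  shows "finite_moments (cov_gauss d U lam) (\<lambda>x. x a)"
  unfolding cov_gauss_eq_distr
proof (rule finite_moments_distr[OF measurable_lin_map])
  show "(\<lambda>x. x a) \<in> borel_measurable (PiM {..<d} (\<lambda>_. lborel))"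
    using assms by (auto intro: measurable_component_singleton)
  show "finite_moments (std_gauss_vec d) (\<lambda>g. lin_map d (cov_sqrt d U lam) g a)"
    using assms by (simp add: lin_map_def finite_moments_std_gauss_vec_dot)
qed

context
  fixes d :: nat and U :: "nat \<Rightarrow> nat \<Rightarrow> real" and lam :: "nat \<Rightarrow> real"
  assumes orth: "\<And>i j. i < d \<Longrightarrow> j < d \<Longrightarrow> (\<Sum>k<d. U i k * U j k) = (if i = j then 1 else 0)"
    and lam_nonneg: "\<And>i. i < d \<Longrightarrow> lam i \<ge> 0"
begin

lemma dot_cov_sqrt: "dot d (cov_sqrt d U lam a) (cov_sqrt d U lam b) = spectral_mat d U lam a b"
proof -
  have "dot d (cov_sqrt d U lam a) (cov_sqrt d U lam b)
      = (\<Sum>j<d. spectral_mat d U (\<lambda>k. sqrt (lam k)) a j * spectral_mat d U (\<lambda>k. sqrt (lam k)) j b)"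
    unfolding dot_def cov_sqrt_def by (simp add: spectral_mat_sym[of d U _ b])
  also have "\<dots> = spectral_mat d U (\<lambda>t. sqrt (lam t) * sqrt (lam t)) a b"
    by (rule spectral_mat_mult[OF orth])
  also have "\<dots> = spectral_mat d U lam a b"
    by (rule spectral_mat_cong) (simp add: lam_nonneg)
  finally show ?thesis .
qed

lemma integral_cov_gauss_moment2:
  assumes "a < d" "b < d"
  shows "(\<integral>x. x a * x b \<partial>cov_gauss d U lam) = spectral_mat d U lam a b"
proof -
  have "(\<lambda>x::nat \<Rightarrow> real. x a * x b) \<in> borel_measurable (PiM {..<d} (\<lambda>_. borel))"
    by (intro borel_measurable_times measurable_coord assms)
  then show ?thesis
    using assms
    by (simp add: integral_cov_gauss lin_map_def integral_std_gauss_vec_dot2 dot_cov_sqrt)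
qed

lemma integral_cov_gauss_moment4:
  assumes "a < d" "b < d" "c < d" "e < d"
  shows "(\<integral>x. x a * (x b * (x c * x e)) \<partial>cov_gauss d U lam)
     = spectral_mat d U lam a b * spectral_mat d U lam c e
     + spectral_mat d U lam a c * spectral_mat d U lam b e
     + spectral_mat d U lam a e * spectral_mat d U lam b c"
proof -
  have "(\<lambda>x::nat \<Rightarrow> real. x a * (x b * (x c * x e))) \<in> borel_measurable (PiM {..<d} (\<lambda>_. borel))"
    by (intro borel_measurable_times measurable_coord assms)
  then show ?thesis
    using assms
    by (simp add: integral_cov_gauss lin_map_def integral_std_gauss_vec_dot4 dot_cov_sqrt)
qed

end

definition monomial :: "('i \<times> 'k) list \<Rightarrow> ('i \<Rightarrow> 'k \<Rightarrow> real) \<Rightarrow> real" where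
  "monomial L \<omega> = (\<Prod>p\<leftarrow>L. \<omega> (fst p) (snd p))"

definition monomial_part :: "('i \<times> 'k) list \<Rightarrow> 'i \<Rightarrow> ('k \<Rightarrow> real) \<Rightarrow> real" where
  "monomial_part L i x = (\<Prod>a\<leftarrow>map snd (filter (\<lambda>p. fst p = i) L). x a)"

lemma monomial_part_eq: "monomial_part L i = (\<lambda>x. \<Prod>a\<leftarrow>map snd (filter (\<lambda>p. fst p = i) L). x a)"
  by (rule ext) (simp add: monomial_part_def)

lemma monomial_append: "monomial (L1 @ L2) \<omega> = monomial L1 \<omega> * monomial L2 \<omega>"
  by (simp add: monomial_def)

lemma monomial_eq_prod_parts:
  assumes "finite I" "fst ` set L \<subseteq> I"
  shows "monomial L \<omega> = (\<Prod>i\<in>I. monomial_part L i (\<omega> i))"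
  using assms(2)
proof (induction L)
  case (Cons p L)
  have "(\<Prod>i\<in>I. monomial_part (p # L) i (\<omega> i))
      = (\<Prod>i\<in>I. monomial_part L i (\<omega> i) * (if i = fst p then \<omega> (fst p) (snd p) else 1))"
    by (intro prod.cong refl) (auto simp: monomial_part_def mult.commute)
  also have "\<dots> = (\<Prod>i\<in>I. monomial_part L i (\<omega> i)) * \<omega> (fst p) (snd p)"
    using Cons.prems assms(1) by (simp add: prod.distrib prod.delta')
  finally show ?case
    using Cons by (simp add: monomial_def mult.commute)
qed (simp add: monomial_def monomial_part_def)

context
  fixes I :: "'i set" and M :: "'i \<Rightarrow> ('k \<Rightarrow> real) measure" and L :: "('i \<times> 'k) list"
  assumes prob: "\<And>i. prob_space (M i)"
    and coords: "\<And>i a. (i, a) \<in> set L \<Longrightarrow> finite_moments (M i) (\<lambda>x. x a)"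
begin

lemma finite_moments_monomial_part: "finite_moments (M i) (monomial_part L i)"
  unfolding monomial_part_eq using prob[THEN prob_space.finite_measure]
  by (intro finite_moments_prod_list[where f="\<lambda>a x. x a"]) (auto intro: coords)

lemma finite_moments_monomial_PiM:
  assumes "fst ` set L \<subseteq> I"
  shows "finite_moments (PiM I M) (monomial L)"
proof -
  have "finite_moments (PiM I M) (\<lambda>\<omega>. \<Prod>p\<leftarrow>L. \<omega> (fst p) (snd p))"
    using assms prob_space_PiM[OF prob] coords
    by (intro finite_moments_prod_list prob_space.finite_measure)
       (auto intro!: finite_moments_component[where f="\<lambda>x. x _"] prob)
  then show ?thesis
    by (simp add: monomial_def[abs_def])
qed

lemma integral_monomial_PiM:
  assumes "finite I" "fst ` set L \<subseteq> I"
  shows "(\<integral>\<omega>. monomial L \<omega> \<partial>PiM I M) = (\<Prod>i\<in>fst ` set L. integral\<^sup>L (M i) (monomial_part L i))"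
proof -
  interpret product_sigma_finite M
    unfolding product_sigma_finite_def using prob prob_space_imp_sigma_finite by blast
  have "(\<integral>\<omega>. monomial L \<omega> \<partial>PiM I M) = (\<integral>\<omega>. (\<Prod>i\<in>I. monomial_part L i (\<omega> i)) \<partial>PiM I M)"
    using monomial_eq_prod_parts[OF assms] by simp
  also have "\<dots> = (\<Prod>i\<in>I. integral\<^sup>L (M i) (monomial_part L i))"
    using assms(1) finite_moments_monomial_part[THEN finite_moments_integrable]
    by (rule product_integral_prod)
  also have "\<dots> = (\<Prod>i\<in>fst ` set L. integral\<^sup>L (M i) (monomial_part L i))"
  proof (rule prod.mono_neutral_right)
    show "\<forall>i\<in>I - fst ` set L. integral\<^sup>L (M i) (monomial_part L i) = 1"
    proof
      fix i assume "i \<in> I - fst ` set L"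
      then have "filter (\<lambda>p. fst p = i) L = []"
        by (auto simp: filter_empty_conv)
      then have "monomial_part L i = (\<lambda>x. 1)"
        by (simp add: monomial_part_eq)
      then show "integral\<^sup>L (M i) (monomial_part L i) = 1"
        using prob_space.prob_space[OF prob] by (simp add: measure_def prob_space.emeasure_space_1[OF prob])
    qed
  qed (use assms in auto)
  finally show ?thesis .
qed

end

definition data_marginal :: "nat \<Rightarrow> nat \<Rightarrow> (nat \<Rightarrow> nat \<Rightarrow> real) \<Rightarrow> (nat \<Rightarrow> real) \<Rightarrow> nat \<Rightarrow> (nat \<Rightarrow> real) measure" where
  "data_marginal d n U lam i = (if i \<le> n then cov_gauss d U lam else std_gauss_vec d)"

lemma data_measure_eq_PiM: "data_measure d n U lam = PiM {..n+1} (data_marginal d n U lam)"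
  unfolding data_measure_def data_marginal_def ..

lemma data_marginal_sample: "i \<le> n \<Longrightarrow> data_marginal d n U lam i = cov_gauss d U lam"
  unfolding data_marginal_def by simp

lemma data_marginal_task: "data_marginal d n U lam (Suc n) = std_gauss_vec d"
  unfolding data_marginal_def by simp

lemma prob_space_data_marginal: "prob_space (data_marginal d n U lam i)"
  unfolding data_marginal_def by (simp add: prob_space_cov_gauss prob_space_std_gauss_vec)

lemma prob_space_data_measure: "prob_space (data_measure d n U lam)"
  unfolding data_measure_eq_PiM by (intro prob_space_PiM prob_space_data_marginal)

lemma finite_moments_data_marginal_coord:
  "a < d \<Longrightarrow> finite_moments (data_marginal d n U lam i) (\<lambda>x. x a)"
  unfolding data_marginal_def
  by (simp add: finite_moments_cov_gauss_coord finite_moments_std_gauss_vec_coord)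

lemma finite_moments_data_monomial:
  "set L \<subseteq> {..n+1} \<times> {..<d} \<Longrightarrow> finite_moments (data_measure d n U lam) (monomial L)"
  unfolding data_measure_eq_PiM
  by (rule finite_moments_monomial_PiM)
     (auto intro: prob_space_data_marginal finite_moments_data_marginal_coord)

lemma integrable_data_monomial [simp]:
  "set L \<subseteq> {..n+1} \<times> {..<d} \<Longrightarrow> integrable (data_measure d n U lam) (monomial L)"
  by (rule finite_moments_integrable[OF finite_moments_data_monomial])

lemma integral_data_monomial:
  assumes "set L \<subseteq> {..n+1} \<times> {..<d}"
  shows "(\<integral>\<omega>. monomial L \<omega> \<partial>data_measure d n U lam)
    = (\<Prod>i\<in>fst ` set L. integral\<^sup>L (data_marginal d n U lam i) (monomial_part L i))"
  unfolding data_measure_eq_PiM using assms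
  by (intro integral_monomial_PiM)
     (auto intro: prob_space_data_marginal finite_moments_data_marginal_coord)

lemma integral_data_monomial_eq_0:
  assumes "set L \<subseteq> {..n+1} \<times> {..<d}" "i \<in> fst ` set L"
    and "integral\<^sup>L (data_marginal d n U lam i) (monomial_part L i) = 0"
  shows "(\<integral>\<omega>. monomial L \<omega> \<partial>data_measure d n U lam) = 0"
  unfolding integral_data_monomial[OF assms(1)] using assms(2,3) by (intro prod_zero) auto

lemma finite_moments_data_coord:
  "i \<le> n + 1 \<Longrightarrow> a < d \<Longrightarrow> finite_moments (data_measure d n U lam) (\<lambda>\<omega>. \<omega> i a)"
  unfolding data_measure_eq_PiM
  by (rule finite_moments_component[where f="\<lambda>x. x a"])
     (auto intro: prob_space_data_marginal finite_moments_data_marginal_coord)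

lemma integral_task_moment1:
  "a < d \<Longrightarrow> integral\<^sup>L (data_marginal d n U lam (Suc n)) (\<lambda>x. x a) = 0"
  by (simp add: data_marginal_task integral_std_gauss_vec_coord)

lemma integral_task_moment2:
  "a < d \<Longrightarrow> b < d \<Longrightarrow> integral\<^sup>L (data_marginal d n U lam (Suc n)) (\<lambda>x. x a * x b) = kdelta a b"
  by (simp add: data_marginal_task integral_std_gauss_vec_moment2)

lemma integral_task_moment3:
  "a < d \<Longrightarrow> b < d \<Longrightarrow> c < d \<Longrightarrow>
    integral\<^sup>L (data_marginal d n U lam (Suc n)) (\<lambda>x. x a * (x b * x c)) = 0"
  by (simp add: data_marginal_task integral_std_gauss_vec_moment3)

definition icl_pred :: "nat \<Rightarrow> nat \<Rightarrow> (nat \<Rightarrow> real) \<Rightarrow> (nat \<Rightarrow> nat \<Rightarrow> real) \<Rightarrow> (nat \<Rightarrow> nat \<Rightarrow> real) \<Rightarrow> real" where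
  "icl_pred d n b A \<omega> = (1 / real n) *
     (\<Sum>l<n. (\<Sum>m<d+1. b m * Z0 d n \<omega> m l) * (\<Sum>p<d. \<Sum>q<d+1. Z0 d n \<omega> q l * A q p * \<omega> n p))"

lemma Z1_query_label: "Z1 d n b A \<omega> d n = icl_pred d n b A \<omega>"
proof -
  define Z where "Z = Z0 d n \<omega>"
  have Zdn: "Z d n = 0"
    unfolding Z_def Z0_def by simp
  have Zpn: "Z p n = (if p < d then \<omega> n p else 0)" for p
    unfolding Z_def Z0_def by simp
  have mask: "(\<Sum>t<n+1. X t * Mmask n t l) = (if l < n then X l else 0)" for X :: "nat \<Rightarrow> real" and l
  proof -
    have "(\<Sum>t<n+1. X t * Mmask n t l) = (\<Sum>t<n+1. if t = l then (if l < n then X l else 0) else 0)"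
      by (intro sum.cong refl) (auto simp: Mmask_def)
    also have "\<dots> = (if l < n then X l else 0)"
      by (simp add: sum.delta')
    finally show ?thesis .
  qed
  have gram: "(\<Sum>p<d+1. (\<Sum>q<d+1. Z q l * Qmat d A q p) * Z p n)
      = (\<Sum>p<d. \<Sum>q<d+1. Z q l * A q p * \<omega> n p)" for l
  proof -
    have "(\<Sum>p<d+1. (\<Sum>q<d+1. Z q l * Qmat d A q p) * Z p n)
        = (\<Sum>p<d. (\<Sum>q<d+1. Z q l * Qmat d A q p) * Z p n)"
      by (simp add: Zpn)
    also have "\<dots> = (\<Sum>p<d. \<Sum>q<d+1. Z q l * A q p * \<omega> n p)"
      by (intro sum.cong refl) (simp add: Zpn Qmat_def sum_distrib_right distrib_right)
    finally show ?thesis .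
  qed
  have "Z1 d n b A \<omega> d n = (1 / real n) * (\<Sum>l<n+1. (\<Sum>t<n+1. (\<Sum>m<d+1. b m * Z m t) * Mmask n t l) *
          (\<Sum>p<d+1. (\<Sum>q<d+1. Z q l * Qmat d A q p) * Z p n))"
    unfolding Z1_def Let_def mat_mult_def mat_transpose_def Pmat_def Z_def[symmetric]
    by (simp add: Zdn)
  also have "\<dots> = (1 / real n) * (\<Sum>l<n+1. (if l < n then (\<Sum>m<d+1. b m * Z m l) else 0) *
          (\<Sum>p<d. \<Sum>q<d+1. Z q l * A q p * \<omega> n p))"
    by (simp only: mask gram)
  also have "\<dots> = icl_pred d n b A \<omega>"
    unfolding icl_pred_def Z_def by simp
  finally show ?thesis .
qed

lemma icl_pred_rescale:
  assumes "\<gamma> \<noteq> 0"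
  shows "icl_pred d n (\<lambda>j. \<gamma> * b j) (\<lambda>i j. A i j / \<gamma>) \<omega> = icl_pred d n b A \<omega>"
proof -
  have "(\<Sum>m<d+1. \<gamma> * b m * Z0 d n \<omega> m l) = \<gamma> * (\<Sum>m<d+1. b m * Z0 d n \<omega> m l)" for l
    by (simp only: sum_distrib_left mult.assoc)
  moreover have "(\<Sum>p<d. \<Sum>q<d+1. Z0 d n \<omega> q l * (A q p / \<gamma>) * \<omega> n p)
      = (1 / \<gamma>) * (\<Sum>p<d. \<Sum>q<d+1. Z0 d n \<omega> q l * A q p * \<omega> n p)" for l
    by (simp only: sum_distrib_left) (intro sum.cong refl, simp)
  ultimately show ?thesis
    using assms unfolding icl_pred_def by simp
qed

definition icl_feature :: "nat \<Rightarrow> nat \<Rightarrow> nat \<Rightarrow> nat \<Rightarrow> nat \<Rightarrow> nat \<Rightarrow> (nat \<Rightarrow> nat \<Rightarrow> real) \<Rightarrow> real" where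
  "icl_feature d n l m q p \<omega> = Z0 d n \<omega> m l * Z0 d n \<omega> q l * \<omega> n p"

lemma icl_pred_eq_sum_features:
  "icl_pred d n b A \<omega> = (1 / real n) *
     (\<Sum>l<n. \<Sum>m<d+1. \<Sum>p<d. \<Sum>q<d+1. (b m * A q p) * icl_feature d n l m q p \<omega>)"
proof -
  have "(\<Sum>m<d+1. b m * Z0 d n \<omega> m l) * (\<Sum>p<d. \<Sum>q<d+1. Z0 d n \<omega> q l * A q p * \<omega> n p)
      = (\<Sum>m<d+1. \<Sum>p<d. \<Sum>q<d+1. (b m * A q p) * icl_feature d n l m q p \<omega>)" for l
    unfolding sum_distrib_right icl_feature_def
    by (intro sum.cong refl) (simp only: sum_distrib_left mult_ac)
  then show ?thesis
    unfolding icl_pred_def by simp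
qed

lemma finite_moments_Z0:
  assumes l: "l < n" and m: "m < d + 1"
  shows "finite_moments (data_measure d n U lam) (\<lambda>\<omega>. Z0 d n \<omega> m l)"
proof (cases "m < d")
  case True
  then show ?thesis
    using finite_moments_data_coord[of l n m d U lam] l by (simp add: Z0_def)
next
  case False
  have "finite_moments (data_measure d n U lam) (\<lambda>\<omega>. \<Sum>k<d. \<omega> l k * \<omega> (n+1) k)"
    using prob_space_data_measure[THEN prob_space.finite_measure] l
    by (intro finite_moments_sum finite_moments_mult finite_moments_data_coord) auto
  then show ?thesis
    using False l by (simp add: Z0_def)
qed

lemma finite_moments_icl_pred: "finite_moments (data_measure d n U lam) (icl_pred d n b A)"
  unfolding icl_pred_def[abs_def] using prob_space_data_measure[THEN prob_space.finite_measure]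
  by (intro finite_moments_cmult finite_moments_sum finite_moments_mult finite_moments_const
      finite_moments_Z0 finite_moments_data_coord) auto

definition gain :: "nat \<Rightarrow> nat \<Rightarrow> (nat \<Rightarrow> real) \<Rightarrow> nat \<Rightarrow> real" where
  "gain d n lam t = 1 / ((real n + 1) / real n * lam t + (1 / real n) * (\<Sum>m<d. lam m))"

lemma A_opt_eq: "A_opt d n U lam i j = (if i < d then - spectral_mat d U (gain d n lam) i j else 0)"
  unfolding A_opt_def spectral_mat_def gain_def ..

definition icl_residual :: "nat \<Rightarrow> nat \<Rightarrow> (nat \<Rightarrow> nat \<Rightarrow> real) \<Rightarrow> (nat \<Rightarrow> real) \<Rightarrow> (nat \<Rightarrow> nat \<Rightarrow> real) \<Rightarrow> real" where
  "icl_residual d n U lam \<omega> = (\<Sum>j<d. \<omega> n j * \<omega> (Suc n) j) - (1 / real n) *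
     (\<Sum>k<n. (\<Sum>a<d. \<Sum>r<d. \<omega> k a * spectral_mat d U (gain d n lam) a r * \<omega> n r) *
       (\<Sum>j<d. \<omega> k j * \<omega> (Suc n) j))"

lemma target_add_icl_pred_opt:
  "(\<Sum>k<d. \<omega> (n+1) k * \<omega> n k) + icl_pred d n (b_opt d) (A_opt d n U lam) \<omega> = icl_residual d n U lam \<omega>"
proof -
  have label: "(\<Sum>m<d+1. b_opt d m * Z0 d n \<omega> m l) = (\<Sum>j<d. \<omega> l j * \<omega> (Suc n) j)"
    if "l \<in> {..<n}" for l
    using that by (simp add: b_opt_def Z0_def)
  have query: "(\<Sum>p<d. \<Sum>q<d+1. Z0 d n \<omega> q l * A_opt d n U lam q p * \<omega> n p)
      = - (\<Sum>a<d. \<Sum>r<d. \<omega> l a * spectral_mat d U (gain d n lam) a r * \<omega> n r)" for l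
  proof -
    have "(\<Sum>p<d. \<Sum>q<d+1. Z0 d n \<omega> q l * A_opt d n U lam q p * \<omega> n p)
        = (\<Sum>p<d. \<Sum>q<d. - (\<omega> l q * spectral_mat d U (gain d n lam) q p * \<omega> n p))"
      by (simp add: A_opt_eq Z0_def)
    also have "\<dots> = - (\<Sum>a<d. \<Sum>r<d. \<omega> l a * spectral_mat d U (gain d n lam) a r * \<omega> n r)"
      by (subst sum.swap) (simp add: sum_negf)
    finally show ?thesis .
  qed
  have "icl_pred d n (b_opt d) (A_opt d n U lam) \<omega> = (1 / real n) *
      (\<Sum>l<n. (\<Sum>j<d. \<omega> l j * \<omega> (Suc n) j) *
        - (\<Sum>a<d. \<Sum>r<d. \<omega> l a * spectral_mat d U (gain d n lam) a r * \<omega> n r))"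
    unfolding icl_pred_def
    by (intro arg_cong[where f="(*) (1 / real n)"] sum.cong refl) (simp only: label query)
  then show ?thesis
    unfolding icl_residual_def by (simp add: sum_negf mult.commute)
qed

lemma icl_residual_eq_monomials:
  "icl_residual d n U lam \<omega> = (\<Sum>j<d. monomial [(n, j), (Suc n, j)] \<omega>) - (1 / real n) *
     (\<Sum>k<n. \<Sum>a<d. \<Sum>r<d. \<Sum>j<d. spectral_mat d U (gain d n lam) a r *
        monomial [(k, a), (n, r), (k, j), (Suc n, j)] \<omega>)"
  unfolding icl_residual_def monomial_def
  by (simp add: sum_distrib_left sum_distrib_right mult_ac)

lemma finite_moments_icl_residual: "finite_moments (data_measure d n U lam) (icl_residual d n U lam)"
proof -
  have "finite_measure (data_measure d n U lam)"
    by (rule prob_space_data_measure[THEN prob_space.finite_measure])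
  then show ?thesis
    unfolding icl_residual_eq_monomials[abs_def]
    by (intro finite_moments_diff finite_moments_cmult finite_moments_sum finite_moments_data_monomial)
       auto
qed

lemma integral_monomial_mult_icl_residual:
  assumes L: "set L \<subseteq> {..n+1} \<times> {..<d}"
  shows "(\<integral>\<omega>. monomial L \<omega> * icl_residual d n U lam \<omega> \<partial>data_measure d n U lam)
    = (\<Sum>j<d. \<integral>\<omega>. monomial (L @ [(n, j), (Suc n, j)]) \<omega> \<partial>data_measure d n U lam)
      - (1 / real n) * (\<Sum>k<n. \<Sum>a<d. \<Sum>r<d. \<Sum>j<d. spectral_mat d U (gain d n lam) a r *
          (\<integral>\<omega>. monomial (L @ [(k, a), (n, r), (k, j), (Suc n, j)]) \<omega> \<partial>data_measure d n U lam))"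
proof -
  let ?M = "data_measure d n U lam"
  let ?X = "\<lambda>j. monomial (L @ [(n, j), (Suc n, j)])"
  let ?Y = "\<lambda>k a r j. monomial (L @ [(k, a), (n, r), (k, j), (Suc n, j)])"
  have pointwise: "monomial L \<omega> * icl_residual d n U lam \<omega> = (\<Sum>j<d. ?X j \<omega>) - (1 / real n) *
      (\<Sum>k<n. \<Sum>a<d. \<Sum>r<d. \<Sum>j<d. spectral_mat d U (gain d n lam) a r * ?Y k a r j \<omega>)" for \<omega>
    unfolding icl_residual_eq_monomials monomial_append
    by (simp add: right_diff_distrib sum_distrib_left mult_ac)
  have int_X: "integrable ?M (?X j)" if "j \<in> {..<d}" for j
    using L that by simp
  have int_Y: "integrable ?M (?Y k a r j)"
    if "k \<in> {..<n}" "a \<in> {..<d}" "r \<in> {..<d}" "j \<in> {..<d}" for k a r j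
    using L that by simp
  have "(\<integral>\<omega>. monomial L \<omega> * icl_residual d n U lam \<omega> \<partial>?M)
      = (\<integral>\<omega>. (\<Sum>j<d. ?X j \<omega>) \<partial>?M) - (1 / real n) *
        (\<integral>\<omega>. (\<Sum>k<n. \<Sum>a<d. \<Sum>r<d. \<Sum>j<d. spectral_mat d U (gain d n lam) a r * ?Y k a r j \<omega>) \<partial>?M)"
    unfolding pointwise
    by (intro Bochner_Integration.integral_diff[THEN trans] arg_cong2[where f="(-)"]
        integral_mult_right_zero Bochner_Integration.integrable_sum
        Bochner_Integration.integrable_mult_right int_X int_Y refl)
  also have "\<dots> = (\<Sum>j<d. integral\<^sup>L ?M (?X j)) - (1 / real n) *
      (\<Sum>k<n. \<Sum>a<d. \<Sum>r<d. \<Sum>j<d. spectral_mat d U (gain d n lam) a r * integral\<^sup>L ?M (?Y k a r j))"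
  proof -
    have "(\<integral>\<omega>. (\<Sum>j<d. ?X j \<omega>) \<partial>?M) = (\<Sum>j<d. integral\<^sup>L ?M (?X j))"
      by (rule Bochner_Integration.integral_sum) (rule int_X)
    moreover have "(\<integral>\<omega>. (\<Sum>k<n. \<Sum>a<d. \<Sum>r<d. \<Sum>j<d. spectral_mat d U (gain d n lam) a r * ?Y k a r j \<omega>) \<partial>?M)
        = (\<Sum>k<n. \<Sum>a<d. \<Sum>r<d. \<Sum>j<d. spectral_mat d U (gain d n lam) a r * integral\<^sup>L ?M (?Y k a r j))"
      by (rule integral_sum4_cmult) (rule int_Y)
    ultimately show ?thesis
      by simp
  qed
  finally show ?thesis .
qed

lemma integrable_monomial_mult_icl_residual:
  "set L \<subseteq> {..n+1} \<times> {..<d} \<Longrightarrow>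
    integrable (data_measure d n U lam) (\<lambda>\<omega>. monomial L \<omega> * icl_residual d n U lam \<omega>)"
  by (intro finite_moments_integrable finite_moments_mult finite_moments_data_monomial
      finite_moments_icl_residual)

text \<open>Every term below has a single factor of \<open>w\<^sub>\<star>\<close>, whose mean is zero.\<close>

lemma integral_feature_xx_mult_residual:
  assumes "l < n" "m < d" "q < d" "p < d"
  shows "(\<integral>\<omega>. icl_feature d n l m q p \<omega> * icl_residual d n U lam \<omega> \<partial>data_measure d n U lam) = 0"
proof -
  let ?L = "[(l, m), (l, q), (n, p)]"
  have "icl_feature d n l m q p \<omega> = monomial ?L \<omega>" for \<omega>
    using assms by (simp add: icl_feature_def monomial_def Z0_def)
  moreover have "(\<integral>\<omega>. monomial (?L @ [(n, j), (Suc n, j)]) \<omega> \<partial>data_measure d n U lam) = 0"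
    if "j < d" for j
    using assms that
    by (intro integral_data_monomial_eq_0[where i="Suc n"]) (auto simp: monomial_part_eq integral_task_moment1)
  moreover have "(\<integral>\<omega>. monomial (?L @ [(k, a), (n, r), (k, j), (Suc n, j)]) \<omega> \<partial>data_measure d n U lam) = 0"
    if "k < n" "a < d" "r < d" "j < d" for k a r j
    using assms that
    by (intro integral_data_monomial_eq_0[where i="Suc n"]) (auto simp: monomial_part_eq integral_task_moment1)
  ultimately show ?thesis
    using assms by (simp add: integral_monomial_mult_icl_residual)
qed

text \<open>Every term below has three factors of \<open>w\<^sub>\<star>\<close>, whose third moments vanish.\<close>

lemma integral_feature_yy_mult_residual:
  assumes "l < n" "p < d"
  shows "(\<integral>\<omega>. icl_feature d n l d d p \<omega> * icl_residual d n U lam \<omega> \<partial>data_measure d n U lam) = 0"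
proof -
  let ?L = "\<lambda>i i'. [(l, i), (Suc n, i), (l, i'), (Suc n, i'), (n, p)]"
  have feature: "icl_feature d n l d d p \<omega> * icl_residual d n U lam \<omega>
      = (\<Sum>i<d. \<Sum>i'<d. monomial (?L i i') \<omega> * icl_residual d n U lam \<omega>)" for \<omega>
  proof -
    have label: "Z0 d n \<omega> d l = (\<Sum>i<d. \<omega> l i * \<omega> (Suc n) i)"
      using assms by (simp add: Z0_def)
    show ?thesis
      by (simp only: icl_feature_def label sum_distrib_left sum_distrib_right)
         (simp add: monomial_def mult_ac)
  qed
  have zero: "(\<integral>\<omega>. monomial (?L i i') \<omega> * icl_residual d n U lam \<omega> \<partial>data_measure d n U lam) = 0"
    if "i \<in> {..<d}" "i' \<in> {..<d}" for i i'
  proof -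
    have "(\<integral>\<omega>. monomial (?L i i' @ [(n, j), (Suc n, j)]) \<omega> \<partial>data_measure d n U lam) = 0"
      if "j < d" for j
      using assms \<open>i \<in> {..<d}\<close> \<open>i' \<in> {..<d}\<close> that
      by (intro integral_data_monomial_eq_0[where i="Suc n"]) (auto simp: monomial_part_eq integral_task_moment3)
    moreover have "(\<integral>\<omega>. monomial (?L i i' @ [(k, a), (n, r), (k, j), (Suc n, j)]) \<omega> \<partial>data_measure d n U lam) = 0"
      if "k < n" "a < d" "r < d" "j < d" for k a r j
      using assms \<open>i \<in> {..<d}\<close> \<open>i' \<in> {..<d}\<close> that
      by (intro integral_data_monomial_eq_0[where i="Suc n"]) (auto simp: monomial_part_eq integral_task_moment3)
    ultimately show ?thesis
      using assms that by (simp add: integral_monomial_mult_icl_residual)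
  qed
  have int: "integrable (data_measure d n U lam) (\<lambda>\<omega>. monomial (?L i i') \<omega> * icl_residual d n U lam \<omega>)"
    if "i \<in> {..<d}" "i' \<in> {..<d}" for i i'
    using assms that by (intro integrable_monomial_mult_icl_residual) auto
  have "(\<integral>\<omega>. (\<Sum>i<d. \<Sum>i'<d. monomial (?L i i') \<omega> * icl_residual d n U lam \<omega>) \<partial>data_measure d n U lam)
      = (\<Sum>i<d. \<Sum>i'<d. \<integral>\<omega>. monomial (?L i i') \<omega> * icl_residual d n U lam \<omega> \<partial>data_measure d n U lam)"
    by (rule integral_sum2) (rule int)
  then show ?thesis
    unfolding feature using zero by simp
qed

context
  fixes d n :: nat and U :: "nat \<Rightarrow> nat \<Rightarrow> real" and lam :: "nat \<Rightarrow> real"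
  assumes n_pos: "n \<ge> 1"
    and orth: "\<And>i j. i < d \<Longrightarrow> j < d \<Longrightarrow> (\<Sum>k<d. U i k * U j k) = (if i = j then 1 else 0)"
    and lam_nonneg: "\<And>i. i < d \<Longrightarrow> lam i \<ge> 0"
begin

abbreviation Cov :: "nat \<Rightarrow> nat \<Rightarrow> real" where
  "Cov \<equiv> spectral_mat d U lam"

abbreviation Gain :: "nat \<Rightarrow> nat \<Rightarrow> real" where
  "Gain \<equiv> spectral_mat d U (gain d n lam)"

abbreviation CovGainCov :: "nat \<Rightarrow> nat \<Rightarrow> real" where
  "CovGainCov \<equiv> spectral_mat d U (\<lambda>t. lam t * gain d n lam t * lam t)"

lemma integral_sample_moment2:
  "i \<le> n \<Longrightarrow> a < d \<Longrightarrow> b < d \<Longrightarrow> integral\<^sup>L (data_marginal d n U lam i) (\<lambda>x. x a * x b) = Cov a b"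
  by (simp add: data_marginal_sample integral_cov_gauss_moment2[OF orth lam_nonneg])

lemma integral_sample_moment4:
  "i \<le> n \<Longrightarrow> a < d \<Longrightarrow> b < d \<Longrightarrow> c < d \<Longrightarrow> e < d \<Longrightarrow>
    integral\<^sup>L (data_marginal d n U lam i) (\<lambda>x. x a * (x b * (x c * x e)))
      = Cov a b * Cov c e + Cov a c * Cov b e + Cov a e * Cov b c"
  by (simp add: data_marginal_sample integral_cov_gauss_moment4[OF orth lam_nonneg])

lemma integral_xy_target_term:
  assumes "l < n" "m < d" "p < d" "i < d" "j < d"
  shows "(\<integral>\<omega>. monomial [(l, m), (l, i), (Suc n, i), (n, p), (n, j), (Suc n, j)] \<omega> \<partial>data_measure d n U lam)
    = Cov m i * Cov j p * kdelta i j"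
proof -
  have "l \<noteq> n" "l \<noteq> Suc n" "n \<noteq> Suc n" "l \<le> n"
    using assms by auto
  then show ?thesis
    using assms
    by (subst integral_data_monomial)
       (auto simp: monomial_part_eq integral_sample_moment2 integral_task_moment2 insert_commute mult_ac
         spectral_mat_sym[of d U lam])
qed

text \<open>For \<open>k = l\<close> the four factors of \<open>x\<^sub>l\<close> pair up as in Isserlis' theorem.\<close>

lemma integral_xy_pred_term:
  assumes "l < n" "m < d" "p < d" "i < d" "k < n" "a < d" "r < d" "j < d"
  shows "(\<integral>\<omega>. monomial [(l, m), (l, i), (Suc n, i), (n, p), (k, a), (n, r), (k, j), (Suc n, j)] \<omega>
      \<partial>data_measure d n U lam)
    = (if k = l then Cov m i * Cov a j + Cov m a * Cov i j + Cov m j * Cov i a else Cov m i * Cov a j)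
      * Cov p r * kdelta i j"
proof -
  have ne: "l \<noteq> n" "l \<noteq> Suc n" "n \<noteq> Suc n" "l \<le> n" "k \<noteq> n" "k \<noteq> Suc n" "k \<le> n"
    using assms by auto
  show ?thesis
  proof (cases "k = l")
    case True
    then show ?thesis
      using assms ne
      by (subst integral_data_monomial)
         (simp_all add: monomial_part_eq integral_sample_moment2 integral_sample_moment4
           integral_task_moment2 insert_commute)
  next
    case False
    then show ?thesis
      using assms ne
      by (subst integral_data_monomial)
         (simp_all add: monomial_part_eq integral_sample_moment2 integral_task_moment2 insert_commute)
  qed
qed

lemma sum_xy_pred_terms:
  assumes "i < d"
  shows "(\<Sum>a<d. \<Sum>r<d. \<Sum>j<d. Gain a r *
        ((if k = l then Cov m i * Cov a j + Cov m a * Cov i j + Cov m j * Cov i a else Cov m i * Cov a j)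
          * Cov p r * kdelta i j))
    = (if k = l then 2 * Cov m i * CovGainCov i p + Cov i i * CovGainCov m p
       else Cov m i * CovGainCov i p)"
proof -
  have inner: "(\<Sum>j<d. Gain a r *
        ((if k = l then Cov m i * Cov a j + Cov m a * Cov i j + Cov m j * Cov i a else Cov m i * Cov a j)
          * Cov p r * kdelta i j))
      = (if k = l then 2 * Cov m i * (Cov i a * Gain a r * Cov r p) + Cov i i * (Cov m a * Gain a r * Cov r p)
         else Cov m i * (Cov i a * Gain a r * Cov r p))" for a r
  proof -
    have "(\<Sum>j<d. Gain a r *
        ((if k = l then Cov m i * Cov a j + Cov m a * Cov i j + Cov m j * Cov i a else Cov m i * Cov a j)
          * Cov p r * kdelta i j))
      = Gain a r * (if k = l then Cov m i * Cov a i + Cov m a * Cov i i + Cov m i * Cov i a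
          else Cov m i * Cov a i) * Cov p r"
      using assms by (simp only: mult.assoc[symmetric] sum_kdelta_left finite_lessThan lessThan_iff)
    then show ?thesis
      by (cases "k = l")
         (simp_all add: spectral_mat_sym[of d U lam a i] spectral_mat_sym[of d U lam p r] algebra_simps)
  qed
  have "(\<Sum>a<d. \<Sum>r<d. \<Sum>j<d. Gain a r *
        ((if k = l then Cov m i * Cov a j + Cov m a * Cov i j + Cov m j * Cov i a else Cov m i * Cov a j)
          * Cov p r * kdelta i j))
      = (\<Sum>a<d. \<Sum>r<d. if k = l then 2 * Cov m i * (Cov i a * Gain a r * Cov r p)
          + Cov i i * (Cov m a * Gain a r * Cov r p) else Cov m i * (Cov i a * Gain a r * Cov r p))"
    by (simp only: inner)
  also have "\<dots> = (if k = l then 2 * Cov m i * CovGainCov i p + Cov i i * CovGainCov m p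
       else Cov m i * CovGainCov i p)"
    by (cases "k = l") (simp_all add: sum.distrib sum_distrib_left[symmetric] spectral_mat_mult3[OF orth])
  finally show ?thesis .
qed

lemma integral_xy_monomial_mult_residual:
  assumes l: "l < n" and "m < d" "p < d" "i < d"
  shows "(\<integral>\<omega>. monomial [(l, m), (l, i), (Suc n, i), (n, p)] \<omega> * icl_residual d n U lam \<omega>
      \<partial>data_measure d n U lam)
    = Cov m i * Cov i p - (1 / real n) * ((real n + 1) * (Cov m i * CovGainCov i p) + Cov i i * CovGainCov m p)"
proof -
  have "set [(l, m), (l, i), (Suc n, i), (n, p)] \<subseteq> {..n+1} \<times> {..<d}"
    using assms by auto
  moreover have "(\<Sum>j<d. Cov m i * Cov j p * kdelta i j) = Cov m i * Cov i p"
    using assms by (simp add: sum_kdelta_left)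
  ultimately have "(\<integral>\<omega>. monomial [(l, m), (l, i), (Suc n, i), (n, p)] \<omega> * icl_residual d n U lam \<omega>
      \<partial>data_measure d n U lam)
    = Cov m i * Cov i p - (1 / real n) * (\<Sum>k<n. if k = l then 2 * Cov m i * CovGainCov i p
        + Cov i i * CovGainCov m p else Cov m i * CovGainCov i p)"
    using assms
    by (simp add: integral_monomial_mult_icl_residual integral_xy_target_term integral_xy_pred_term
        sum_xy_pred_terms)
  also have "\<dots> = Cov m i * Cov i p - (1 / real n) *
      ((real n + 1) * (Cov m i * CovGainCov i p) + Cov i i * CovGainCov m p)"
    using l by (simp add: sum_if_eq_count algebra_simps)
  finally show ?thesis .
qed

lemma gain_mult_eigenvalue:
  assumes "t < d"
  shows "((real n + 1) * lam t + (\<Sum>s<d. lam s)) / real n * gain d n lam t * lam t = lam t"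
proof -
  define D where "D = ((real n + 1) * lam t + (\<Sum>s<d. lam s)) / real n"
  have n: "real n > 0"
    using n_pos by simp
  have gain: "gain d n lam t = 1 / D"
    unfolding gain_def D_def using n by (simp add: field_simps)
  show ?thesis
  proof (cases "D = 0")
    case True
    have "0 \<le> lam t" "0 \<le> (\<Sum>s<d. lam s)"
      using assms lam_nonneg by (auto intro: sum_nonneg)
    then have "lam t = 0"
      using True n unfolding D_def by (simp add: divide_eq_0_iff add_nonneg_eq_0_iff)
    then show ?thesis
      by simp
  next
    case False
    then show ?thesis
      by (simp add: gain D_def[symmetric])
  qed
qed

lemma sum_xy_terms_eq_0:
  "(\<Sum>i<d. Cov m i * Cov i p - (1 / real n) *
      ((real n + 1) * (Cov m i * CovGainCov i p) + Cov i i * CovGainCov m p)) = 0"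
proof -
  let ?tr = "\<Sum>t<d. lam t"
  have "(\<Sum>i<d. Cov m i * Cov i p - (1 / real n) *
      ((real n + 1) * (Cov m i * CovGainCov i p) + Cov i i * CovGainCov m p))
    = (\<Sum>i<d. Cov m i * Cov i p) - (1 / real n) *
      ((real n + 1) * (\<Sum>i<d. Cov m i * CovGainCov i p)
        + (\<Sum>i<d. Cov i i) * CovGainCov m p)"
    by (simp add: sum_subtractf sum.distrib sum_distrib_left sum_distrib_right distrib_left mult_ac)
  also have "\<dots> = spectral_mat d U (\<lambda>t. lam t * lam t) m p - (1 / real n) *
      ((real n + 1) * spectral_mat d U (\<lambda>t. lam t * (lam t * gain d n lam t * lam t)) m p
        + ?tr * CovGainCov m p)"
    by (simp only: spectral_mat_mult[OF orth] spectral_mat_trace[OF orth])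
  also have "\<dots> = spectral_mat d U (\<lambda>t. lam t * lam t
      - ((real n + 1) * lam t + ?tr) / real n * gain d n lam t * lam t * lam t) m p"
  proof -
    have "spectral_mat d U (\<lambda>t. ((real n + 1) * lam t + ?tr) / real n * gain d n lam t * lam t * lam t) m p
        = spectral_mat d U (\<lambda>t. (1 / real n) * ((real n + 1) * (lam t * (lam t * gain d n lam t * lam t))
            + ?tr * (lam t * gain d n lam t * lam t))) m p"
      by (rule spectral_mat_cong) (simp add: field_simps)
    then show ?thesis
      by (simp only: spectral_mat_diff spectral_mat_add spectral_mat_cmult)
  qed
  also have "\<dots> = spectral_mat d U (\<lambda>_. 0) m p"
    by (rule spectral_mat_cong) (simp only: gain_mult_eigenvalue diff_self)
  also have "\<dots> = 0"
    by (rule spectral_mat_zero)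
  finally show ?thesis .
qed

lemma integral_feature_xy_mult_residual:
  assumes "l < n" "m < d" "p < d"
  shows "(\<integral>\<omega>. icl_feature d n l m d p \<omega> * icl_residual d n U lam \<omega> \<partial>data_measure d n U lam) = 0"
proof -
  let ?L = "\<lambda>i. [(l, m), (l, i), (Suc n, i), (n, p)]"
  have feature: "icl_feature d n l m d p \<omega> * icl_residual d n U lam \<omega>
      = (\<Sum>i<d. monomial (?L i) \<omega> * icl_residual d n U lam \<omega>)" for \<omega>
    using assms by (simp add: icl_feature_def Z0_def monomial_def sum_distrib_left sum_distrib_right mult_ac)
  have int: "integrable (data_measure d n U lam) (\<lambda>\<omega>. monomial (?L i) \<omega> * icl_residual d n U lam \<omega>)"
    if "i \<in> {..<d}" for i
    using assms that by (intro integrable_monomial_mult_icl_residual) auto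
  have "(\<integral>\<omega>. icl_feature d n l m d p \<omega> * icl_residual d n U lam \<omega> \<partial>data_measure d n U lam)
      = (\<Sum>i<d. \<integral>\<omega>. monomial (?L i) \<omega> * icl_residual d n U lam \<omega> \<partial>data_measure d n U lam)"
    unfolding feature by (rule Bochner_Integration.integral_sum) (rule int)
  also have "\<dots> = (\<Sum>i<d. Cov m i * Cov i p - (1 / real n) *
      ((real n + 1) * (Cov m i * CovGainCov i p) + Cov i i * CovGainCov m p))"
    using assms by (intro sum.cong refl) (simp add: integral_xy_monomial_mult_residual)
  also have "\<dots> = 0"
    by (rule sum_xy_terms_eq_0)
  finally show ?thesis .
qed

lemma integral_feature_mult_residual:
  assumes "l < n" "m < d + 1" "q < d + 1" "p < d"
  shows "(\<integral>\<omega>. icl_feature d n l m q p \<omega> * icl_residual d n U lam \<omega> \<partial>data_measure d n U lam) = 0"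
proof -
  have swap: "icl_feature d n l m q p = icl_feature d n l q m p"
    by (simp add: icl_feature_def[abs_def] mult_ac)
  consider "m < d" "q < d" | "m < d" "q = d" | "m = d" "q < d" | "m = d" "q = d"
    using assms(2,3) by linarith
  then show ?thesis
  proof cases
    case 1
    then show ?thesis
      using assms by (simp add: integral_feature_xx_mult_residual)
  next
    case 2
    then show ?thesis
      using assms by (simp add: integral_feature_xy_mult_residual)
  next
    case 3
    then show ?thesis
      using assms swap integral_feature_xy_mult_residual[of l q p] by simp
  next
    case 4
    then show ?thesis
      using assms by (simp add: integral_feature_yy_mult_residual)
  qed
qed

lemma integral_icl_pred_mult_residual:
  "(\<integral>\<omega>. icl_pred d n b A \<omega> * icl_residual d n U lam \<omega> \<partial>data_measure d n U lam) = 0"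
proof -
  let ?F = "\<lambda>l m p q \<omega>. icl_feature d n l m q p \<omega> * icl_residual d n U lam \<omega>"
  have pointwise: "icl_pred d n b A \<omega> * icl_residual d n U lam \<omega>
      = (1 / real n) * (\<Sum>l<n. \<Sum>m<d+1. \<Sum>p<d. \<Sum>q<d+1. (b m * A q p) * ?F l m p q \<omega>)" for \<omega>
    by (simp only: icl_pred_eq_sum_features sum_distrib_right mult.assoc)
  have int: "integrable (data_measure d n U lam) (?F l m p q)"
    if "l \<in> {..<n}" "m \<in> {..<d+1}" "p \<in> {..<d}" "q \<in> {..<d+1}" for l m p q
    unfolding icl_feature_def using that
    by (intro finite_moments_integrable finite_moments_mult finite_moments_Z0 finite_moments_data_coord
        finite_moments_icl_residual) auto
  have "(\<integral>\<omega>. (\<Sum>l<n. \<Sum>m<d+1. \<Sum>p<d. \<Sum>q<d+1. (b m * A q p) * ?F l m p q \<omega>) \<partial>data_measure d n U lam)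
      = (\<Sum>l<n. \<Sum>m<d+1. \<Sum>p<d. \<Sum>q<d+1. (b m * A q p) * integral\<^sup>L (data_measure d n U lam) (?F l m p q))"
    by (rule integral_sum4_cmult) (rule int)
  then show ?thesis
    unfolding pointwise by (simp add: integral_feature_mult_residual)
qed

end

theorem theorem1:
  fixes d n :: nat and U :: "nat \<Rightarrow> nat \<Rightarrow> real" and lam :: "nat \<Rightarrow> real"
  assumes "d \<ge> 1" and "n \<ge> 1"
    and orth: "\<And>i j. i < d \<Longrightarrow> j < d \<Longrightarrow> (\<Sum>k<d. U i k * U j k) = (if i = j then 1 else 0)"
    and lam_nonneg: "\<And>i. i < d \<Longrightarrow> lam i \<ge> 0"
  shows "(\<forall>b A. icl_loss d n U lam (b_opt d) (A_opt d n U lam) \<le> icl_loss d n U lam b A)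
    \<and> (\<forall>\<gamma>::real. \<gamma> \<noteq> 0 \<longrightarrow> (\<forall>b A.
          icl_loss d n U lam (\<lambda>j. \<gamma> * b_opt d j) (\<lambda>i j. A_opt d n U lam i j / \<gamma>)
            \<le> icl_loss d n U lam b A))"
proof -
  let ?M = "data_measure d n U lam"
  let ?res = "icl_residual d n U lam"
  let ?opt = "icl_pred d n (b_opt d) (A_opt d n U lam)"
  have loss: "icl_loss d n U lam b A = (\<integral>\<omega>. (icl_pred d n b A \<omega> - ?opt \<omega> + ?res \<omega>)\<^sup>2 \<partial>?M)" for b A
    unfolding icl_loss_def Z1_query_label
    by (intro Bochner_Integration.integral_cong refl)
       (simp add: target_add_icl_pred_opt[symmetric] algebra_simps)
  have orthogonal: "(\<integral>\<omega>. (icl_pred d n b A \<omega> - ?opt \<omega>) * ?res \<omega> \<partial>?M) = 0" for b A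
    using integral_icl_pred_mult_residual[OF \<open>n \<ge> 1\<close> orth lam_nonneg]
    by (simp add: left_diff_distrib Bochner_Integration.integral_diff finite_moments_integrable
        finite_moments_mult finite_moments_icl_pred finite_moments_icl_residual)
  have minimal: "icl_loss d n U lam (b_opt d) (A_opt d n U lam) \<le> icl_loss d n U lam b A" for b A
    unfolding loss
    using integral_power2_le_add_orthogonal[OF prob_space_data_measure[THEN prob_space.finite_measure]
        finite_moments_diff[OF finite_moments_icl_pred finite_moments_icl_pred]
        finite_moments_icl_residual orthogonal]
    by simp
  have rescaled: "icl_loss d n U lam (\<lambda>j. \<gamma> * b_opt d j) (\<lambda>i j. A_opt d n U lam i j / \<gamma>)
      = icl_loss d n U lam (b_opt d) (A_opt d n U lam)" if "\<gamma> \<noteq> 0" for \<gamma>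
    unfolding icl_loss_def Z1_query_label icl_pred_rescale[OF that] ..
  show ?thesis
    using minimal rescaled by simp
qed

end
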